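(* Let $J$ be an instance of TAP and let $a_1,a_2,\dots,a_n$ be an enumeration of all applicants (a master list of applicants) such that, for every school $s$, the preference list of $s$ is the restriction of the order $a_1,a_2,\dots,a_n$ to the applicants $a$ with $s\in S(a)$. Then $J$ admits exactly one stable matching, namely the matching $\mathcal M$ produced by the following procedure (Serial Dictatorship): start with $\mathcal M=\emptyset$; for $i=1,2,\dots,n$ in turn, if $S(a_i)$ contains a school $s$ such that $|\mathcal M_p(s)|<c_p(s)$ for both subjects $p\in\mathbf p(a_i)$, then add $(a_i,s)$ to $\mathcal M$ where $s$ is the most preferred such school on $a_i$'s preference list.
   Context: An instance of the Teachers Assignment Problem (TAP) consists of a finite set $A$ of applicants, a finite set $S$ of schools and a finite set $P$ of subjects. Each applicant $a\in A$ has a type $\mathbf p(a)=\{p_1(a),p_2(a)\}\subseteq P$ consisting of two distinct subjects, a set $S(a)\subseteq S$ of acceptable schools, and a strict linear order (her preference list) on $S(a)$. Each school $s$ has a partial capacity $c_p(s)\in\mathbb N$ for each subject $p\in P$, and a strict linear order (its preference list) on the set of applicants $a$ with $s\in S(a)$. An assignment $\mathcal M$ is a set of pairs $(a,s)$ with $s\in S(a)$ such that each applicant lies in at most one pair; write $\mathcal M(a)=s$ if $(a,s)\in\mathcal M$ and $\mathcal M(a)=\emptyset$ if $a$ is in no pair (unassigned). For a school $s$ and subjects $p,r$ let $\mathcal M_p(s)=\{a:(a,s)\in\mathcal M,\ p\in\mathbf p(a)\}$ and $\mathcal M_{p,r}(s)=\{a:(a,s)\in\mathcal M,\ \mathbf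 p(a)=\{p,r\}\}$. An assignment is a matching if $|\mathcal M_p(s)|\le c_p(s)$ for all $s\in S$, $p\in P$. School $s$ is undersubscribed in $p$ if $|\mathcal M_p(s)|<c_p(s)$. A pair $(a,s)$ with $s\in S(a)$ and $\mathbf p(a)=\{p_1,p_2\}$ blocks a matching $\mathcal M$ if ($a$ is unassigned or $a$ prefers $s$ to $\mathcal M(a)$) and at least one of: (i) $s$ is undersubscribed in both $p_1$ and $p_2$; (ii) for some $i\in\{1,2\}$, $s$ is undersubscribed in $p_i$ and $s$ prefers $a$ to some applicant in $\mathcal M_{p_{3-i}}(s)$; (iii) $s$ prefers $a$ to some applicant in $\mathcal M_{p_1,p_2}(s)$; (iv) $s$ prefers $a$ to two distinct applicants $a_1\in\mathcal M_{p_1}(s)$ and $a_2\in\mathcal M_{p_2}(s)$. A matching is stable if no pair blocks it. *)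

theory Defs
  imports Main
begin

text \<open>Applicants of type 'a, schools of type 's, subjects of type 'p.
  An instance is given by
    A :: applicant set, S :: school set, P :: subject set,
    ptype a :: the type of applicant a (two distinct subjects),
    acc a :: the set S(a) of acceptable schools,
    apref a s t :: applicant a strictly prefers school s to school t,
    cap s p :: partial capacity c_p(s),
    spref s a b :: school s strictly prefers applicant a to applicant b.\<close>

definition strict_linord_on :: "'x set \<Rightarrow> ('x \<Rightarrow> 'x \<Rightarrow> bool) \<Rightarrow> bool" where
  "strict_linord_on X R \<longleftrightarrow>
     (\<forall>x\<in>X. \<not> R x x) \<and>
     (\<forall>x\<in>X. \<forall>y\<in>X. \<forall>z\<in>X. R x y \<longrightarrow> R y z \<longrightarrow> R x z) \<and>
     (\<forall>x\<in>X. \<forall>y\<in>X. x \<noteq> y \<longrightarrow> R x y \<or> R y x)"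

definition tap_instance ::
  "'a set \<Rightarrow> 's set \<Rightarrow> 'p set \<Rightarrow> ('a \<Rightarrow> 'p set) \<Rightarrow> ('a \<Rightarrow> 's set)
   \<Rightarrow> ('a \<Rightarrow> 's \<Rightarrow> 's \<Rightarrow> bool) \<Rightarrow> ('s \<Rightarrow> 'p \<Rightarrow> nat) \<Rightarrow> ('s \<Rightarrow> 'a \<Rightarrow> 'a \<Rightarrow> bool) \<Rightarrow> bool" where
  "tap_instance A S P ptype acc apref cap spref \<longleftrightarrow>
     finite A \<and> finite S \<and> finite P \<and>
     (\<forall>a\<in>A. \<exists>p1 p2. p1 \<noteq> p2 \<and> ptype a = {p1, p2} \<and> ptype a \<subseteq> P) \<and>
     (\<forall>a\<in>A. acc a \<subseteq> S) \<and>
     (\<forall>a\<in>A. strict_linord_on (acc a) (apref a)) \<and>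
     (\<forall>s\<in>S. strict_linord_on {a\<in>A. s \<in> acc a} (spref s))"

definition is_assignment :: "'a set \<Rightarrow> ('a \<Rightarrow> 's set) \<Rightarrow> ('a \<times> 's) set \<Rightarrow> bool" where
  "is_assignment A acc M \<longleftrightarrow>
     (\<forall>(a,s)\<in>M. a \<in> A \<and> s \<in> acc a) \<and>
     (\<forall>a s t. (a,s) \<in> M \<longrightarrow> (a,t) \<in> M \<longrightarrow> s = t)"

definition Msub :: "('a \<Rightarrow> 'p set) \<Rightarrow> ('a \<times> 's) set \<Rightarrow> 's \<Rightarrow> 'p \<Rightarrow> 'a set" where
  "Msub ptype M s p = {a. (a,s) \<in> M \<and> p \<in> ptype a}"

definition Msub2 :: "('a \<Rightarrow> 'p set) \<Rightarrow> ('a \<times> 's) set \<Rightarrow> 's \<Rightarrow> 'p \<Rightarrow> 'p \<Rightarrow> 'a set" where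
  "Msub2 ptype M s p r = {a. (a,s) \<in> M \<and> ptype a = {p, r}}"

definition is_matching ::
  "'a set \<Rightarrow> 's set \<Rightarrow> 'p set \<Rightarrow> ('a \<Rightarrow> 'p set) \<Rightarrow> ('a \<Rightarrow> 's set)
   \<Rightarrow> ('s \<Rightarrow> 'p \<Rightarrow> nat) \<Rightarrow> ('a \<times> 's) set \<Rightarrow> bool" where
  "is_matching A S P ptype acc cap M \<longleftrightarrow>
     is_assignment A acc M \<and> (\<forall>s\<in>S. \<forall>p\<in>P. card (Msub ptype M s p) \<le> cap s p)"

definition undersub :: "('a \<Rightarrow> 'p set) \<Rightarrow> ('s \<Rightarrow> 'p \<Rightarrow> nat) \<Rightarrow> ('a \<times> 's) set \<Rightarrow> 's \<Rightarrow> 'p \<Rightarrow> bool" where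
  "undersub ptype cap M s p \<longleftrightarrow> card (Msub ptype M s p) < cap s p"

definition blocking ::
  "'a set \<Rightarrow> ('a \<Rightarrow> 'p set) \<Rightarrow> ('a \<Rightarrow> 's set) \<Rightarrow> ('a \<Rightarrow> 's \<Rightarrow> 's \<Rightarrow> bool)
   \<Rightarrow> ('s \<Rightarrow> 'p \<Rightarrow> nat) \<Rightarrow> ('s \<Rightarrow> 'a \<Rightarrow> 'a \<Rightarrow> bool) \<Rightarrow> ('a \<times> 's) set \<Rightarrow> 'a \<Rightarrow> 's \<Rightarrow> bool" where
  "blocking A ptype acc apref cap spref M a s \<longleftrightarrow>
     a \<in> A \<and> s \<in> acc a \<and>
     ((\<forall>t. (a,t) \<notin> M) \<or> (\<exists>t. (a,t) \<in> M \<and> apref a s t)) \<and>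
     (\<exists>p1 p2. p1 \<noteq> p2 \<and> ptype a = {p1, p2} \<and>
        ((undersub ptype cap M s p1 \<and> undersub ptype cap M s p2) \<or>
         (undersub ptype cap M s p1 \<and> (\<exists>b\<in>Msub ptype M s p2. spref s a b)) \<or>
         (undersub ptype cap M s p2 \<and> (\<exists>b\<in>Msub ptype M s p1. spref s a b)) \<or>
         (\<exists>b\<in>Msub2 ptype M s p1 p2. spref s a b) \<or>
         (\<exists>b1\<in>Msub ptype M s p1. \<exists>b2\<in>Msub ptype M s p2. b1 \<noteq> b2 \<and> spref s a b1 \<and> spref s a b2)))"

definition stable ::
  "'a set \<Rightarrow> 's set \<Rightarrow> 'p set \<Rightarrow> ('a \<Rightarrow> 'p set) \<Rightarrow> ('a \<Rightarrow> 's set)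
   \<Rightarrow> ('a \<Rightarrow> 's \<Rightarrow> 's \<Rightarrow> bool) \<Rightarrow> ('s \<Rightarrow> 'p \<Rightarrow> nat) \<Rightarrow> ('s \<Rightarrow> 'a \<Rightarrow> 'a \<Rightarrow> bool)
   \<Rightarrow> ('a \<times> 's) set \<Rightarrow> bool" where
  "stable A S P ptype acc apref cap spref M \<longleftrightarrow>
     is_matching A S P ptype acc cap M \<and>
     (\<forall>a s. \<not> blocking A ptype acc apref cap spref M a s)"

definition master_list ::
  "'a set \<Rightarrow> 's set \<Rightarrow> ('a \<Rightarrow> 's set) \<Rightarrow> ('s \<Rightarrow> 'a \<Rightarrow> 'a \<Rightarrow> bool) \<Rightarrow> 'a list \<Rightarrow> bool" where
  "master_list A S acc spref xs \<longleftrightarrow>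
     distinct xs \<and> set xs = A \<and>
     (\<forall>s\<in>S. \<forall>a\<in>A. \<forall>b\<in>A. s \<in> acc a \<longrightarrow> s \<in> acc b \<longrightarrow>
        (spref s a b \<longleftrightarrow> (\<exists>i j. i < j \<and> j < length xs \<and> xs ! i = a \<and> xs ! j = b)))"

definition sd_candidates ::
  "('a \<Rightarrow> 'p set) \<Rightarrow> ('a \<Rightarrow> 's set) \<Rightarrow> ('s \<Rightarrow> 'p \<Rightarrow> nat) \<Rightarrow> ('a \<times> 's) set \<Rightarrow> 'a \<Rightarrow> 's set" where
  "sd_candidates ptype acc cap M a = {s \<in> acc a. \<forall>p\<in>ptype a. undersub ptype cap M s p}"

definition sd_step ::
  "('a \<Rightarrow> 'p set) \<Rightarrow> ('a \<Rightarrow> 's set) \<Rightarrow> ('a \<Rightarrow> 's \<Rightarrow> 's \<Rightarrow> bool) \<Rightarrow> ('s \<Rightarrow> 'p \<Rightarrow> nat)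
   \<Rightarrow> ('a \<times> 's) set \<Rightarrow> 'a \<Rightarrow> ('a \<times> 's) set" where
  "sd_step ptype acc apref cap M a =
     (let C = sd_candidates ptype acc cap M a in
      if C = {} then M
      else insert (a, THE s. s \<in> C \<and> (\<forall>t\<in>C. t \<noteq> s \<longrightarrow> apref a s t)) M)"

definition serial_dictatorship ::
  "('a \<Rightarrow> 'p set) \<Rightarrow> ('a \<Rightarrow> 's set) \<Rightarrow> ('a \<Rightarrow> 's \<Rightarrow> 's \<Rightarrow> bool) \<Rightarrow> ('s \<Rightarrow> 'p \<Rightarrow> nat)
   \<Rightarrow> 'a list \<Rightarrow> ('a \<times> 's) set" where
  "serial_dictatorship ptype acc apref cap xs = foldl (sd_step ptype acc apref cap) {} xs"

end

theory Submission
  imports Defs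
begin

text \<open>Since every applicant has exactly two subjects, the four blocking conditions collapse:
  \<open>(a, s)\<close> blocks iff \<open>a\<close> would improve and, in each of her subjects, \<open>s\<close> is undersubscribed
  or holds a teacher it ranks below \<open>a\<close> (\<open>has_room_for\<close>). Serial dictatorship is stable: if \<open>s\<close>
  was not available when \<open>a\<close>'s turn came, one of her subjects was already filled at \<open>s\<close> by earlier,
  hence preferred, applicants, and it stays so. Conversely, a stable matching agrees with serial
  dictatorship on every prefix of the master list: when \<open>a\<close>'s turn comes, a school still
  available to her can be full in \<open>M\<close> only through applicants ranked after \<open>a\<close>, so stability
  forces \<open>M\<close> to give \<open>a\<close> her best available school.\<close>

lemma strict_linord_on_asym:
  "strict_linord_on X R \<Longrightarrow> x \<in> X \<Longrightarrow> y \<in> X \<Longrightarrow> R x y \<Longrightarrow> \<not> R y x"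
  unfolding strict_linord_on_def by blast

lemma strict_linord_on_ex_max:
  assumes "finite C" "C \<noteq> {}" "C \<subseteq> X" "strict_linord_on X R"
  shows "\<exists>s\<in>C. \<forall>t\<in>C. t \<noteq> s \<longrightarrow> R s t"
  using assms
proof (induction C rule: finite_ne_induct)
  case (singleton x)
  then show ?case by auto
next
  case (insert x F)
  then obtain s where s: "s \<in> F" "\<forall>t\<in>F. t \<noteq> s \<longrightarrow> R s t" by auto
  have "x \<in> X" "s \<in> X" "x \<noteq> s" using insert.prems insert.hyps s by auto
  then have "R x s \<or> R s x" using insert.prems(2) unfolding strict_linord_on_def by blast
  then show ?case
    using s insert.prems \<open>x \<in> X\<close> \<open>s \<in> X\<close> unfolding strict_linord_on_def
    by (metis insert_iff subsetD)
qed

lemma distinct_append_nth_order: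
  assumes "distinct (us @ vs)" "b \<in> set us" "a \<in> set vs"
  shows "\<exists>i j. i < j \<and> j < length (us @ vs) \<and> (us @ vs) ! i = b \<and> (us @ vs) ! j = a"
    and "\<not> (\<exists>i j. i < j \<and> j < length (us @ vs) \<and> (us @ vs) ! i = a \<and> (us @ vs) ! j = b)"
proof -
  obtain i where i: "i < length us" "us ! i = b" using assms(2) by (auto simp: in_set_conv_nth)
  obtain k where k: "k < length vs" "vs ! k = a" using assms(3) by (auto simp: in_set_conv_nth)
  have b_at: "(us @ vs) ! i = b" and a_at: "(us @ vs) ! (length us + k) = a"
    using i k by (simp_all add: nth_append)
  show "\<exists>i j. i < j \<and> j < length (us @ vs) \<and> (us @ vs) ! i = b \<and> (us @ vs) ! j = a"
    using i k b_at a_at by (intro exI[of _ i] exI[of _ "length us + k"]) auto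
  show "\<not> (\<exists>i j. i < j \<and> j < length (us @ vs) \<and> (us @ vs) ! i = a \<and> (us @ vs) ! j = b)"
  proof
    assume "\<exists>i j. i < j \<and> j < length (us @ vs) \<and> (us @ vs) ! i = a \<and> (us @ vs) ! j = b"
    then obtain i' j' where ij': "i' < j'" "j' < length (us @ vs)"
      "(us @ vs) ! i' = a" "(us @ vs) ! j' = b" by auto
    have "i' = length us + k"
      using ij' k a_at nth_eq_iff_index_eq[OF assms(1), of i' "length us + k"] by simp
    moreover have "j' = i"
      using ij' i b_at nth_eq_iff_index_eq[OF assms(1), of j' i] by simp
    ultimately show False using ij' i by simp
  qed
qed

lemma is_assignment_functional:
  "is_assignment A acc M \<Longrightarrow> (a, s) \<in> M \<Longrightarrow> (a, t) \<in> M \<Longrightarrow> s = t"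
  unfolding is_assignment_def by blast

definition has_room_for ::
  "('a \<Rightarrow> 'p set) \<Rightarrow> ('s \<Rightarrow> 'p \<Rightarrow> nat) \<Rightarrow> ('s \<Rightarrow> 'a \<Rightarrow> 'a \<Rightarrow> bool) \<Rightarrow> ('a \<times> 's) set
   \<Rightarrow> 's \<Rightarrow> 'a \<Rightarrow> 'p \<Rightarrow> bool" where
  "has_room_for ptype cap spref M s a p \<longleftrightarrow>
     undersub ptype cap M s p \<or> (\<exists>b\<in>Msub ptype M s p. spref s a b)"

lemma sd_step_mono: "M \<subseteq> sd_step ptype acc apref cap M a"
  by (auto simp: sd_step_def Let_def)

lemma Domain_sd_step: "Domain (sd_step ptype acc apref cap M a) \<subseteq> insert a (Domain M)"
  by (auto simp: sd_step_def Let_def)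

lemma foldl_sd_step_mono: "M \<subseteq> foldl (sd_step ptype acc apref cap) M zs"
  by (induction zs arbitrary: M) (simp_all, metis sd_step_mono subset_trans)

lemma Domain_foldl_sd_step:
  "Domain (foldl (sd_step ptype acc apref cap) M zs) \<subseteq> Domain M \<union> set zs"
proof (induction zs arbitrary: M)
  case Nil
  then show ?case by simp
next
  case (Cons z zs)
  then show ?case using Domain_sd_step[of ptype acc apref cap M z] by fastforce
qed

lemma sd_step_no_candidates:
  "sd_candidates ptype acc cap M a = {} \<Longrightarrow> sd_step ptype acc apref cap M a = M"
  by (simp add: sd_step_def)

locale tap =
  fixes A :: "'a set" and S :: "'s set" and P :: "'p set"
    and ptype :: "'a \<Rightarrow> 'p set" and acc :: "'a \<Rightarrow> 's set"
    and apref :: "'a \<Rightarrow> 's \<Rightarrow> 's \<Rightarrow> bool" and cap :: "'s \<Rightarrow> 'p \<Rightarrow> nat"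
    and spref :: "'s \<Rightarrow> 'a \<Rightarrow> 'a \<Rightarrow> bool"
  assumes tap_inst: "tap_instance A S P ptype acc apref cap spref"
begin

lemma finite_applicants: "finite A"
  using tap_inst by (simp add: tap_instance_def)

lemma acc_subset: "a \<in> A \<Longrightarrow> acc a \<subseteq> S"
  using tap_inst by (simp add: tap_instance_def)

lemma finite_acc: "a \<in> A \<Longrightarrow> finite (acc a)"
  using tap_inst acc_subset finite_subset unfolding tap_instance_def by metis

lemma ptype_pair: "a \<in> A \<Longrightarrow> \<exists>p1 p2. p1 \<noteq> p2 \<and> ptype a = {p1, p2} \<and> ptype a \<subseteq> P"
  using tap_inst by (simp add: tap_instance_def)

lemma apref_linord: "a \<in> A \<Longrightarrow> strict_linord_on (acc a) (apref a)"
  using tap_inst by (simp add: tap_instance_def)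

lemma finite_Msub: "is_assignment A acc M \<Longrightarrow> finite (Msub ptype M s p)"
  by (rule finite_subset[OF _ finite_applicants]) (auto simp: is_assignment_def Msub_def)

lemma blocking_iff:
  assumes M: "is_assignment A acc M"
  shows "blocking A ptype acc apref cap spref M a s \<longleftrightarrow>
    a \<in> A \<and> s \<in> acc a \<and> ((\<forall>t. (a,t) \<notin> M) \<or> (\<exists>t. (a,t) \<in> M \<and> apref a s t)) \<and>
    (\<forall>p\<in>ptype a. has_room_for ptype cap spref M s a p)"
    (is "?blocking \<longleftrightarrow> ?applicant \<and> ?acceptable \<and> ?improves \<and> ?room")
proof
  assume ?blocking
  then obtain p1 p2 where p: "ptype a = {p1, p2}" and pair: "?applicant \<and> ?acceptable \<and> ?improves" and
    options: "(undersub ptype cap M s p1 \<and> undersub ptype cap M s p2) \<or>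
      (undersub ptype cap M s p1 \<and> (\<exists>b\<in>Msub ptype M s p2. spref s a b)) \<or>
      (undersub ptype cap M s p2 \<and> (\<exists>b\<in>Msub ptype M s p1. spref s a b)) \<or>
      (\<exists>b\<in>Msub2 ptype M s p1 p2. spref s a b) \<or>
      (\<exists>b1\<in>Msub ptype M s p1. \<exists>b2\<in>Msub ptype M s p2. b1 \<noteq> b2 \<and> spref s a b1 \<and> spref s a b2)"
    unfolding blocking_def by blast
  have "Msub2 ptype M s p1 p2 \<subseteq> Msub ptype M s p1 \<inter> Msub ptype M s p2"
    unfolding Msub_def Msub2_def by auto
  then have "has_room_for ptype cap spref M s a p1 \<and> has_room_for ptype cap spref M s a p2"
    using options unfolding has_room_for_def by blast
  then show "?applicant \<and> ?acceptable \<and> ?improves \<and> ?room" using pair p by auto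
next
  assume "?applicant \<and> ?acceptable \<and> ?improves \<and> ?room"
  then have pair: "?applicant \<and> ?acceptable \<and> ?improves" and room: ?room by auto
  then obtain p1 p2 where p: "p1 \<noteq> p2" "ptype a = {p1, p2}" using ptype_pair by blast
  \<comment> \<open>Condition (iv) needs two distinct teachers; one teacher in both subjects is condition (iii).\<close>
  have common_teacher: "b \<in> Msub2 ptype M s p1 p2"
    if "b \<in> Msub ptype M s p1" "b \<in> Msub ptype M s p2" for b
  proof -
    have "b \<in> A" using that M unfolding Msub_def is_assignment_def by auto
    then obtain q1 q2 where "ptype b = {q1, q2}" using ptype_pair by blast
    then show ?thesis using that p(1) unfolding Msub_def Msub2_def by auto
  qed
  have room12: "has_room_for ptype cap spref M s a p1" "has_room_for ptype cap spref M s a p2"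
    using room p by auto
  have "(undersub ptype cap M s p1 \<and> undersub ptype cap M s p2) \<or>
      (undersub ptype cap M s p1 \<and> (\<exists>b\<in>Msub ptype M s p2. spref s a b)) \<or>
      (undersub ptype cap M s p2 \<and> (\<exists>b\<in>Msub ptype M s p1. spref s a b)) \<or>
      (\<exists>b\<in>Msub2 ptype M s p1 p2. spref s a b) \<or>
      (\<exists>b1\<in>Msub ptype M s p1. \<exists>b2\<in>Msub ptype M s p2. b1 \<noteq> b2 \<and> spref s a b1 \<and> spref s a b2)"
  proof (cases "\<exists>b1\<in>Msub ptype M s p1. \<exists>b2\<in>Msub ptype M s p2. b1 \<noteq> b2 \<and> spref s a b1 \<and> spref s a b2")
    case False
    then show ?thesis using room12 common_teacher unfolding has_room_for_def by fastforce
  qed blast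
  then show ?blocking using pair p unfolding blocking_def by blast
qed

lemma sd_step_chooses_best:
  assumes a: "a \<in> A" and nonempty: "sd_candidates ptype acc cap M a \<noteq> {}"
  obtains s where "s \<in> sd_candidates ptype acc cap M a"
    and "\<forall>t\<in>sd_candidates ptype acc cap M a. t \<noteq> s \<longrightarrow> apref a s t"
    and "sd_step ptype acc apref cap M a = insert (a, s) M"
proof -
  let ?C = "sd_candidates ptype acc cap M a"
  have C_acc: "?C \<subseteq> acc a" unfolding sd_candidates_def by auto
  then obtain s where best: "s \<in> ?C \<and> (\<forall>t\<in>?C. t \<noteq> s \<longrightarrow> apref a s t)"
    using strict_linord_on_ex_max[OF finite_subset[OF C_acc finite_acc[OF a]] nonempty]
      apref_linord[OF a] by blast
  have "(THE s. s \<in> ?C \<and> (\<forall>t\<in>?C. t \<noteq> s \<longrightarrow> apref a s t)) = s"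
  proof (rule the_equality)
    show "s \<in> ?C \<and> (\<forall>t\<in>?C. t \<noteq> s \<longrightarrow> apref a s t)" by (fact best)
  next
    fix s' assume best': "s' \<in> ?C \<and> (\<forall>t\<in>?C. t \<noteq> s' \<longrightarrow> apref a s' t)"
    show "s' = s"
    proof (rule ccontr)
      assume "s' \<noteq> s"
      then have "apref a s s'" "apref a s' s" using best best' by auto
      then show False using best best' C_acc strict_linord_on_asym[OF apref_linord[OF a]] by blast
    qed
  qed
  then have "sd_step ptype acc apref cap M a = insert (a, s) M"
    using nonempty by (simp add: sd_step_def)
  then show thesis using that best by blast
qed

lemma is_matching_insert_candidate:
  assumes M: "is_matching A S P ptype acc cap M" and a: "a \<in> A" "a \<notin> Domain M"
    and s: "s \<in> sd_candidates ptype acc cap M a"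
  shows "is_matching A S P ptype acc cap (insert (a, s) M)"
proof -
  have assignment: "is_assignment A acc M" using M by (simp add: is_matching_def)
  have "card (Msub ptype (insert (a, s) M) t p) \<le> cap t p"
    if "t \<in> S" "p \<in> P" for t p
  proof (cases "t = s \<and> p \<in> ptype a")
    case True
    then have "Msub ptype (insert (a, s) M) t p = insert a (Msub ptype M t p)"
      and "a \<notin> Msub ptype M t p" and "undersub ptype cap M t p"
      using a s unfolding Msub_def sd_candidates_def by auto
    then show ?thesis using finite_Msub[OF assignment] by (simp add: undersub_def)
  next
    case False
    then have "Msub ptype (insert (a, s) M) t p = Msub ptype M t p"
      unfolding Msub_def by auto
    then show ?thesis using M that by (simp add: is_matching_def)
  qed
  moreover have "is_assignment A acc (insert (a, s) M)"
    using assignment a s unfolding is_assignment_def sd_candidates_def by auto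
  ultimately show ?thesis by (simp add: is_matching_def)
qed

lemma is_matching_sd_step:
  assumes "is_matching A S P ptype acc cap M" "a \<in> A" "a \<notin> Domain M"
  shows "is_matching A S P ptype acc cap (sd_step ptype acc apref cap M a)"
proof (cases "sd_candidates ptype acc cap M a = {}")
  case True
  then show ?thesis using assms(1) by (simp add: sd_step_no_candidates)
next
  case False
  then show ?thesis
    using sd_step_chooses_best[OF assms(2)] is_matching_insert_candidate[OF assms] by metis
qed

lemma is_matching_foldl_sd_step:
  assumes "is_matching A S P ptype acc cap M" "distinct zs" "set zs \<subseteq> A" "set zs \<inter> Domain M = {}"
  shows "is_matching A S P ptype acc cap (foldl (sd_step ptype acc apref cap) M zs)"
  using assms
proof (induction zs arbitrary: M)
  case Nil
  then show ?case by simp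
next
  case (Cons z zs)
  have "set zs \<inter> insert z (Domain M) = {}" using Cons.prems by simp
  then have "set zs \<inter> Domain (sd_step ptype acc apref cap M z) = {}"
    using Domain_sd_step[of ptype acc apref cap M z] by (metis Int_mono order_refl subset_empty)
  then show ?case using Cons is_matching_sd_step[of M z] by simp
qed

lemma is_matching_subset:
  assumes "is_matching A S P ptype acc cap M" "N \<subseteq> M"
  shows "is_matching A S P ptype acc cap N"
proof -
  have "Msub ptype N s p \<subseteq> Msub ptype M s p" for s p
    using assms(2) unfolding Msub_def by auto
  then show ?thesis
    using assms card_mono[OF finite_Msub] unfolding is_matching_def is_assignment_def
    by (meson order_trans subsetD)
qed

lemma Msub_eq_of_full:
  assumes M: "is_matching A S P ptype acc cap M" and "N \<subseteq> M" "s \<in> S" "p \<in> P"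
    and full: "\<not> undersub ptype cap N s p"
  shows "Msub ptype N s p = Msub ptype M s p"
proof (rule card_seteq)
  show "finite (Msub ptype M s p)" using M finite_Msub by (simp add: is_matching_def)
  show "Msub ptype N s p \<subseteq> Msub ptype M s p" using \<open>N \<subseteq> M\<close> unfolding Msub_def by auto
  show "card (Msub ptype M s p) \<le> card (Msub ptype N s p)"
    using M full \<open>s \<in> S\<close> \<open>p \<in> P\<close> unfolding is_matching_def undersub_def
    by (meson leI order_trans)
qed

lemma sd_step_no_better_candidate:
  assumes a: "a \<in> A" "a \<notin> Domain M" and s: "s \<in> sd_candidates ptype acc cap M a"
    and t: "(a, t) \<in> sd_step ptype acc apref cap M a"
  shows "\<not> apref a s t"
proof
  assume "apref a s t"
  obtain s0 where s0: "s0 \<in> sd_candidates ptype acc cap M a"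
    and best: "\<forall>t\<in>sd_candidates ptype acc cap M a. t \<noteq> s0 \<longrightarrow> apref a s0 t"
    and "sd_step ptype acc apref cap M a = insert (a, s0) M"
    using sd_step_chooses_best[OF a(1)] s by blast
  then have "t = s0" using a(2) t by auto
  then have "s = t \<or> apref a t s" using best s by auto
  moreover have "s \<in> acc a" "t \<in> acc a" using s s0 \<open>t = s0\<close> unfolding sd_candidates_def by auto
  ultimately show False
    using \<open>apref a s t\<close> strict_linord_on_asym[OF apref_linord[OF a(1)]] by blast
qed

lemma sd_candidate_of_partner:
  assumes M: "is_matching A S P ptype acc cap M" and t: "(a, t) \<in> M"
    and "N \<subseteq> M" "a \<notin> Domain N"
  shows "t \<in> sd_candidates ptype acc cap N a"
  unfolding sd_candidates_def undersub_def
proof (intro CollectI conjI ballI)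
  have assignment: "is_assignment A acc M" using M by (simp add: is_matching_def)
  then have "a \<in> A" "t \<in> acc a" using t unfolding is_assignment_def by auto
  then show "t \<in> acc a" by blast
  fix p assume p: "p \<in> ptype a"
  have "Msub ptype N t p \<subseteq> Msub ptype M t p - {a}" and a_in: "a \<in> Msub ptype M t p"
    using \<open>N \<subseteq> M\<close> \<open>a \<notin> Domain N\<close> t p unfolding Msub_def by auto
  then have "card (Msub ptype N t p) \<le> card (Msub ptype M t p - {a})"
    using finite_Msub[OF assignment] by (intro card_mono) auto
  also have "\<dots> < card (Msub ptype M t p)"
    using finite_Msub[OF assignment] a_in by (rule card_Diff1_less)
  also have "\<dots> \<le> cap t p"
    using M p ptype_pair[OF \<open>a \<in> A\<close>] acc_subset[OF \<open>a \<in> A\<close>] \<open>t \<in> acc a\<close>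
    unfolding is_matching_def by blast
  finally show "card (Msub ptype N t p) < cap t p" .
qed

end

locale tap_master_list = tap +
  fixes xs :: "'a list"
  assumes master: "master_list A S acc spref xs"
begin

lemma distinct_xs: "distinct xs"
  using master by (simp add: master_list_def)

lemma set_xs: "set xs = A"
  using master by (simp add: master_list_def)

lemma spref_earlier:
  assumes xs: "xs = us @ vs" and "b \<in> set us" "a \<in> set vs" "s \<in> S" "s \<in> acc a" "s \<in> acc b"
  shows "spref s b a" and "\<not> spref s a b"
proof -
  have "a \<in> A" "b \<in> A" using assms set_xs by auto
  then have "spref s b a \<longleftrightarrow> (\<exists>i j. i < j \<and> j < length xs \<and> xs ! i = b \<and> xs ! j = a)"
    and "spref s a b \<longleftrightarrow> (\<exists>i j. i < j \<and> j < length xs \<and> xs ! i = a \<and> xs ! j = b)"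
    using master assms(4-6) unfolding master_list_def by blast+
  then show "spref s b a" and "\<not> spref s a b"
    using distinct_append_nth_order[of us vs b a] distinct_xs assms(2,3) unfolding xs by auto
qed

lemma is_matching_sd_prefix:
  assumes "xs = ys @ zs"
  shows "is_matching A S P ptype acc cap (foldl (sd_step ptype acc apref cap) {} ys)"
proof (rule is_matching_foldl_sd_step)
  show "is_matching A S P ptype acc cap {}"
    by (simp add: is_matching_def is_assignment_def Msub_def)
qed (use assms distinct_xs set_xs in auto)

lemma serial_dictatorship_stable:
  "stable A S P ptype acc apref cap spref (serial_dictatorship ptype acc apref cap xs)"
proof -
  let ?f = "sd_step ptype acc apref cap"
  let ?M = "serial_dictatorship ptype acc apref cap xs"
  have M: "is_matching A S P ptype acc cap ?M"
    using is_matching_sd_prefix[of xs "[]"] by (simp add: serial_dictatorship_def)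
  then have assignment: "is_assignment A acc ?M" by (simp add: is_matching_def)
  have "\<not> blocking A ptype acc apref cap spref ?M a s" for a s
  proof
    assume "blocking A ptype acc apref cap spref ?M a s"
    then have a: "a \<in> A" and s: "s \<in> acc a"
      and improves: "(\<forall>t. (a, t) \<notin> ?M) \<or> (\<exists>t. (a, t) \<in> ?M \<and> apref a s t)"
      and room: "\<forall>p\<in>ptype a. has_room_for ptype cap spref ?M s a p"
      unfolding blocking_iff[OF assignment] by blast+
    obtain ys zs where xs: "xs = ys @ a # zs" using a set_xs by (metis split_list)
    let ?N = "foldl ?f {} ys"
    have "?M = foldl ?f (?f ?N a) zs" unfolding serial_dictatorship_def xs by simp
    then have step_M: "?f ?N a \<subseteq> ?M" using foldl_sd_step_mono by metis
    then have N_M: "?N \<subseteq> ?M" using sd_step_mono by (rule subset_trans[rotated])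
    have N_ys: "Domain ?N \<subseteq> set ys" using Domain_foldl_sd_step[of ptype acc apref cap "{}" ys] by simp
    then have "a \<notin> Domain ?N" using xs distinct_xs by auto
    have "s \<notin> sd_candidates ptype acc cap ?N a"
    proof
      assume candidate: "s \<in> sd_candidates ptype acc cap ?N a"
      then have "sd_candidates ptype acc cap ?N a \<noteq> {}" by blast
      then obtain t where "?f ?N a = insert (a, t) ?N"
        using sd_step_chooses_best[OF a] by metis
      then have "(a, t) \<in> ?f ?N a" by simp
      then have "\<not> apref a s t" and "(a, t) \<in> ?M"
        using sd_step_no_better_candidate[OF a \<open>a \<notin> Domain ?N\<close> candidate] step_M by auto
      then show False using improves assignment unfolding is_assignment_def by blast
    qed
    then obtain p where p: "p \<in> ptype a" "\<not> undersub ptype cap ?N s p"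
      using s unfolding sd_candidates_def by auto
    have "p \<in> P" "s \<in> S" using p a s ptype_pair acc_subset by blast+
    then have same: "Msub ptype ?N s p = Msub ptype ?M s p"
      using Msub_eq_of_full[OF M N_M] p(2) by blast
    have "\<not> spref s a b" if "b \<in> Msub ptype ?N s p" for b
    proof -
      have "b \<in> set ys" using that N_ys unfolding Msub_def by auto
      moreover have "s \<in> acc b" using that same assignment unfolding Msub_def is_assignment_def by auto
      ultimately show ?thesis using spref_earlier(2)[OF xs] \<open>s \<in> S\<close> s by simp
    qed
    then show False
      using room p same unfolding has_room_for_def undersub_def by auto
  qed
  then show ?thesis using M by (simp add: stable_def)
qed

lemma stable_no_better_candidate:
  assumes stable: "stable A S P ptype acc apref cap spref M" and xs: "xs = ys @ a # zs"
    and candidate: "s \<in> sd_candidates ptype acc cap {(b, s) \<in> M. b \<in> set ys} a"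
  shows "\<exists>t. (a, t) \<in> M \<and> \<not> apref a s t"
proof (rule ccontr)
  assume "\<not> (\<exists>t. (a, t) \<in> M \<and> \<not> apref a s t)"
  then have improves: "(\<forall>t. (a, t) \<notin> M) \<or> (\<exists>t. (a, t) \<in> M \<and> apref a s t)" by blast
  let ?R = "{(b, s) \<in> M. b \<in> set ys}"
  have M: "is_matching A S P ptype acc cap M" using stable by (simp add: stable_def)
  then have assignment: "is_assignment A acc M" by (simp add: is_matching_def)
  have a: "a \<in> A" using xs set_xs by auto
  have R: "is_matching A S P ptype acc cap ?R" by (rule is_matching_subset[OF M]) auto
  have s: "s \<in> acc a" "s \<in> S" and under: "\<forall>p\<in>ptype a. undersub ptype cap ?R s p"
    using candidate a acc_subset unfolding sd_candidates_def by auto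
  have "(a, s) \<notin> M"
  proof
    assume "(a, s) \<in> M"
    with improves obtain t where "(a, t) \<in> M" "apref a s t" by blast
    with \<open>(a, s) \<in> M\<close> assignment have "apref a s s" unfolding is_assignment_def by blast
    then show False using strict_linord_on_asym[OF apref_linord[OF a] s(1) s(1)] by blast
  qed
  have "has_room_for ptype cap spref M s a p" if p: "p \<in> ptype a" for p
  proof (cases "undersub ptype cap M s p")
    case False
    then have "card (Msub ptype ?R s p) < card (Msub ptype M s p)"
      using under p unfolding undersub_def by auto
    moreover have "finite (Msub ptype ?R s p)"
      using R finite_Msub unfolding is_matching_def by blast
    ultimately obtain b where b: "b \<in> Msub ptype M s p" "b \<notin> Msub ptype ?R s p"
      by (meson card_mono leD subsetI)
    then have "(b, s) \<in> M" "b \<notin> set ys" unfolding Msub_def by auto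
    then have "b \<in> A" "s \<in> acc b" "b \<noteq> a"
      using \<open>(a, s) \<notin> M\<close> assignment unfolding is_assignment_def by auto
    then have "b \<in> set zs" using \<open>b \<notin> set ys\<close> xs set_xs by auto
    then have "spref s a b" using spref_earlier(1)[of "ys @ [a]" zs a b s] xs s \<open>s \<in> acc b\<close> by simp
    then show ?thesis using b unfolding has_room_for_def by blast
  qed (simp add: has_room_for_def)
  then have "blocking A ptype acc apref cap spref M a s"
    unfolding blocking_iff[OF assignment] using a s improves by blast
  then show False using stable by (simp add: stable_def)
qed

lemma sd_step_restrict_stable:
  assumes stable: "stable A S P ptype acc apref cap spref M" and xs: "xs = ys @ a # zs"
  shows "sd_step ptype acc apref cap {(b, s) \<in> M. b \<in> set ys} a = {(b, s) \<in> M. b \<in> set (ys @ [a])}"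
proof -
  let ?R = "{(b, s) \<in> M. b \<in> set ys}"
  let ?C = "sd_candidates ptype acc cap ?R a"
  have M: "is_matching A S P ptype acc cap M" using stable by (simp add: stable_def)
  then have assignment: "is_assignment A acc M" by (simp add: is_matching_def)
  have a: "a \<in> A" "a \<notin> Domain ?R" using xs set_xs distinct_xs by auto
  show ?thesis
  proof (cases "a \<in> Domain M")
    case False
    then have "?C = {}" using stable_no_better_candidate[OF stable xs] by blast
    moreover have "{(b, s) \<in> M. b \<in> set (ys @ [a])} = ?R" using False by auto
    ultimately show ?thesis by (simp add: sd_step_no_candidates)
  next
    case True
    then obtain t where t: "(a, t) \<in> M" by blast
    then have "t \<in> ?C" by (rule sd_candidate_of_partner[OF M]) (use a(2) in auto)
    then obtain s0 where s0: "s0 \<in> ?C" and best: "\<forall>t\<in>?C. t \<noteq> s0 \<longrightarrow> apref a s0 t"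
      and step: "sd_step ptype acc apref cap ?R a = insert (a, s0) ?R"
      using sd_step_chooses_best[OF a(1)] by blast
    have "t = s0"
    proof (rule ccontr)
      assume "t \<noteq> s0"
      then have "apref a s0 t" using best \<open>t \<in> ?C\<close> by auto
      moreover obtain t' where "(a, t') \<in> M" "\<not> apref a s0 t'"
        using stable_no_better_candidate[OF stable xs s0] by blast
      moreover have "t' = t" using is_assignment_functional[OF assignment calculation(2) t] .
      ultimately show False by simp
    qed
    moreover have "{(b, s) \<in> M. b \<in> set (ys @ [a])} = insert (a, t) ?R"
      using t is_assignment_functional[OF assignment] by auto
    ultimately show ?thesis using step by simp
  qed
qed

lemma sd_prefix_eq_restrict_stable:
  assumes stable: "stable A S P ptype acc apref cap spref M"
  shows "xs = ys @ zs \<Longrightarrow> foldl (sd_step ptype acc apref cap) {} ys = {(b, s) \<in> M. b \<in> set ys}"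
proof (induction ys arbitrary: zs rule: rev_induct)
  case Nil
  then show ?case by simp
next
  case (snoc a ys)
  then have "foldl (sd_step ptype acc apref cap) {} ys = {(b, s) \<in> M. b \<in> set ys}" by simp
  then show ?case using sd_step_restrict_stable[OF stable] snoc.prems by simp
qed

lemma stable_eq_serial_dictatorship:
  assumes stable: "stable A S P ptype acc apref cap spref M"
  shows "M = serial_dictatorship ptype acc apref cap xs"
proof -
  have "Domain M \<subseteq> set xs"
    using stable set_xs unfolding stable_def is_matching_def is_assignment_def by auto
  then show ?thesis
    using sd_prefix_eq_restrict_stable[OF stable, of xs "[]"]
    unfolding serial_dictatorship_def by auto
qed

end

theorem theorem2:
  fixes A :: "'a set" and S :: "'s set" and P :: "'p set"
    and ptype :: "'a \<Rightarrow> 'p set" and acc :: "'a \<Rightarrow> 's set"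
    and apref :: "'a \<Rightarrow> 's \<Rightarrow> 's \<Rightarrow> bool" and cap :: "'s \<Rightarrow> 'p \<Rightarrow> nat"
    and spref :: "'s \<Rightarrow> 'a \<Rightarrow> 'a \<Rightarrow> bool" and xs :: "'a list"
  assumes "tap_instance A S P ptype acc apref cap spref"
    and "master_list A S acc spref xs"
  shows "{M. stable A S P ptype acc apref cap spref M} = {serial_dictatorship ptype acc apref cap xs}"
proof -
  interpret tap_master_list A S P ptype acc apref cap spref xs
    using assms by (unfold_locales) auto
  show ?thesis using serial_dictatorship_stable stable_eq_serial_dictatorship by blast
qed

end
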